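(* Let $d\ge1$, $k\ge2$, and let $G=(V,D)$ be an $\mathcal{R}_d$-connected $k$-fold $\mathcal{R}_d$-circuit whose set of technicolour vertices is $X=\{u,v\}$. (i) If $uv\in D$, then $G$ is the graphical parallel connection of $k$ $\mathcal{R}_d$-circuits along $uv$. (ii) If $uv\notin D$, then $G$ is obtained from the graphical parallel connection of $k+1$ $\mathcal{R}_d$-circuits along $uv$ by deleting $uv$.
   Context: For a graph $G=(V,E)$ and a generic $p:V\to\mathbb{R}^d$ (coordinates algebraically independent over $\mathbb{Q}$), the rigidity matrix has a row for each $uv\in E$ with $p(u)-p(v)$ in the $d$ columns of $u$, $p(v)-p(u)$ in those of $v$, zeros elsewhere; $\mathcal{R}_d$ is its row matroid, with rank $r_d$. A graph is $\mathcal{R}_d$-connected if the restriction of $\mathcal{R}_d$ to its edge set is a connected matroid (every two edges lie in a common circuit). A set of edges is cyclic if it is a union of $\mathcal{R}_d$-circuits. $(V,D)$ is a $k$-fold $\mathcal{R}_d$-circuit if $D$ is cyclic and $r_d(D)=|D|-k$. Its principal partition is the partition $\{A_1,\dots,A_\ell\}$ of $D$ such that $\{D\setminus A_i\}$ is exactly the set of $(k-1)$-fold $\mathcal{R}_d$-circuits contained in $D$. A vertex is technicolour if it is incident with edges from at least two parts of the principal partition. The graphical parallel connection of graphs $H_1,\dots,H_m$ along the edge $uv$ is their union, where each $H_i$ contains the edge $uv$ and $H_i\cap H_j$ consists exactly of the vertices $u,v$ and the edge $uv$ for $i\neq j$. *)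

theory Defs
  imports Complex_Main
begin

definition is_graph :: "'v set \<Rightarrow> 'v set set \<Rightarrow> bool" where
  "is_graph V E \<longleftrightarrow> finite V \<and> (\<forall>e\<in>E. \<exists>a b. a \<noteq> b \<and> a \<in> V \<and> b \<in> V \<and> e = {a, b})"

text \<open>A polynomial is given by its finitely supported coefficient function on monomials
  (exponent vectors m with finite support contained in I).\<close>
definition alg_indep_over_rat :: "'i set \<Rightarrow> ('i \<Rightarrow> real) \<Rightarrow> bool" where
  "alg_indep_over_rat I x \<longleftrightarrow>
     (\<forall>c :: ('i \<Rightarrow> nat) \<Rightarrow> rat.
        finite {m. c m \<noteq> 0} \<and>
        (\<forall>m. c m \<noteq> 0 \<longrightarrow> finite {i. m i \<noteq> 0} \<and> {i. m i \<noteq> 0} \<subseteq> I) \<and>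
        (\<exists>m. c m \<noteq> 0)
        \<longrightarrow> (\<Sum>m | c m \<noteq> 0. of_rat (c m) * (\<Prod>i | m i \<noteq> 0. x i ^ m i)) \<noteq> 0)"

text \<open>p : V \<rightarrow> R^d (coordinate i < d of p w is p w i) is generic.\<close>
definition generic :: "nat \<Rightarrow> 'v set \<Rightarrow> ('v \<Rightarrow> nat \<Rightarrow> real) \<Rightarrow> bool" where
  "generic d V p \<longleftrightarrow> alg_indep_over_rat (V \<times> {..<d}) (\<lambda>(w, i). p w i)"

text \<open>Row of the rigidity matrix for the edge e = {a,b}; columns are indexed by
  pairs (w, i) with w a vertex and i < d. In the columns of a it equals p(a) - p(b),
  in those of b it equals p(b) - p(a), zero elsewhere.\<close>
definition rig_row :: "nat \<Rightarrow> ('v \<Rightarrow> nat \<Rightarrow> real) \<Rightarrow> 'v set \<Rightarrow> 'v \<times> nat \<Rightarrow> real" where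
  "rig_row d p e = (\<lambda>(w, i). if w \<in> e \<and> i < d then (\<Sum>x\<in>e. p w i - p x i) else 0)"

definition rig_indep :: "nat \<Rightarrow> ('v \<Rightarrow> nat \<Rightarrow> real) \<Rightarrow> 'v set set \<Rightarrow> bool" where
  "rig_indep d p F \<longleftrightarrow> finite F \<and>
     (\<forall>c :: 'v set \<Rightarrow> real. (\<forall>col. (\<Sum>e\<in>F. c e * rig_row d p e col) = 0)
        \<longrightarrow> (\<forall>e\<in>F. c e = 0))"

definition rig_rank :: "nat \<Rightarrow> ('v \<Rightarrow> nat \<Rightarrow> real) \<Rightarrow> 'v set set \<Rightarrow> nat" where
  "rig_rank d p F = Max (card ` {I. I \<subseteq> F \<and> rig_indep d p I})"

definition rig_circuit :: "nat \<Rightarrow> ('v \<Rightarrow> nat \<Rightarrow> real) \<Rightarrow> 'v set set \<Rightarrow> bool" where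
  "rig_circuit d p C \<longleftrightarrow> finite C \<and> \<not> rig_indep d p C \<and> (\<forall>C'. C' \<subset> C \<longrightarrow> rig_indep d p C')"

definition rig_cyclic :: "nat \<Rightarrow> ('v \<Rightarrow> nat \<Rightarrow> real) \<Rightarrow> 'v set set \<Rightarrow> bool" where
  "rig_cyclic d p D \<longleftrightarrow> D = \<Union>{C. C \<subseteq> D \<and> rig_circuit d p C}"

definition kfold_circuit :: "nat \<Rightarrow> ('v \<Rightarrow> nat \<Rightarrow> real) \<Rightarrow> nat \<Rightarrow> 'v set set \<Rightarrow> bool" where
  "kfold_circuit d p k D \<longleftrightarrow> finite D \<and> rig_cyclic d p D \<and> rig_rank d p D + k = card D"

definition rig_connected :: "nat \<Rightarrow> ('v \<Rightarrow> nat \<Rightarrow> real) \<Rightarrow> 'v set set \<Rightarrow> bool" where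
  "rig_connected d p D \<longleftrightarrow>
     (\<forall>e\<in>D. \<forall>f\<in>D. e \<noteq> f \<longrightarrow> (\<exists>C. C \<subseteq> D \<and> rig_circuit d p C \<and> e \<in> C \<and> f \<in> C))"

definition principal_partition ::
  "nat \<Rightarrow> ('v \<Rightarrow> nat \<Rightarrow> real) \<Rightarrow> nat \<Rightarrow> 'v set set \<Rightarrow> 'v set set set \<Rightarrow> bool" where
  "principal_partition d p k D P \<longleftrightarrow>
     \<Union>P = D \<and> {} \<notin> P \<and> (\<forall>A\<in>P. \<forall>B\<in>P. A \<noteq> B \<longrightarrow> A \<inter> B = {}) \<and>
     (\<lambda>A. D - A) ` P = {D'. D' \<subseteq> D \<and> kfold_circuit d p (k - 1) D'}"

definition technicolour :: "'v set set set \<Rightarrow> 'v \<Rightarrow> bool" where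
  "technicolour P w \<longleftrightarrow>
     (\<exists>A\<in>P. \<exists>B\<in>P. A \<noteq> B \<and> (\<exists>e\<in>A. w \<in> e) \<and> (\<exists>f\<in>B. w \<in> f))"

definition parallel_connection ::
  "('v set \<times> 'v set set) list \<Rightarrow> 'v \<Rightarrow> 'v \<Rightarrow> 'v set \<Rightarrow> 'v set set \<Rightarrow> bool" where
  "parallel_connection Hs u v VV EE \<longleftrightarrow>
     (\<forall>H\<in>set Hs. is_graph (fst H) (snd H) \<and> {u, v} \<in> snd H) \<and>
     (\<forall>i<length Hs. \<forall>j<length Hs. i \<noteq> j \<longrightarrow>
        fst (Hs ! i) \<inter> fst (Hs ! j) = {u, v} \<and> snd (Hs ! i) \<inter> snd (Hs ! j) = {{u, v}}) \<and>
     VV = (\<Union>H\<in>set Hs. fst H) \<and> EE = (\<Union>H\<in>set Hs. snd H)"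

end

theory Submission
  imports Defs "HOL-Library.Function_Algebras"
begin

(* Write R e for the row of the edge e in the rigidity matrix and e0 = uv. As u and v are the
   only technicolour vertices, every other vertex meets edges of a single part A of the principal
   partition, so a vector lying in the row spaces of both A and D - A is a load in equilibrium
   supported on {u, v}, i.e. a multiple of R e0. Connectivity then makes R e0 a combination of
   the rows of A in which every edge of A occurs. Comparing r(D) = |D| - k with
   r(D - A) = |D - A| - (k - 1) forces every part to be independent; hence a part containing e0
   is {e0}, and every other part A gives a circuit A + e0. Adding such a part to a union of parts
   containing another part raises the rank by |A| - 1, so exactly k parts avoid e0. Two of the
   circuits A + e0 share only the edge e0 and the vertices u, v. *)

section \<open>Linear combinations of rows of the rigidity matrix\<close>

lemma sum_fun_eq: "(\<Sum>a\<in>A. f a) = (\<lambda>x. \<Sum>a\<in>A. f a x)"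
  for f :: "'a \<Rightarrow> 'b \<Rightarrow> 'c::comm_monoid_add"
  by (induction A rule: infinite_finite_induct) (auto simp: fun_eq_iff)

interpretation real_fun: vector_space "\<lambda>(r::real) (f::'a \<Rightarrow> real) x. r * f x"
  by unfold_locales (auto simp: fun_eq_iff algebra_simps)

definition rig_comb ::
  "nat \<Rightarrow> ('v \<Rightarrow> nat \<Rightarrow> real) \<Rightarrow> ('v set \<Rightarrow> real) \<Rightarrow> 'v set set \<Rightarrow> 'v \<times> nat \<Rightarrow> real" where
  "rig_comb d p c F = (\<lambda>col. \<Sum>e\<in>F. c e * rig_row d p e col)"

lemma rig_indep_iff_comb:
  "rig_indep d p F \<longleftrightarrow> finite F \<and> (\<forall>c. rig_comb d p c F = 0 \<longrightarrow> (\<forall>e\<in>F. c e = 0))"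
  by (simp add: rig_indep_def rig_comb_def fun_eq_iff)

lemma rig_indepD: "rig_indep d p F \<Longrightarrow> rig_comb d p c F = 0 \<Longrightarrow> e \<in> F \<Longrightarrow> c e = 0"
  by (simp add: rig_indep_iff_comb)

lemma rig_comb_insert:
  "finite F \<Longrightarrow> e \<notin> F \<Longrightarrow>
     rig_comb d p c (insert e F) = (\<lambda>col. c e * rig_row d p e col) + rig_comb d p c F"
  by (simp add: rig_comb_def fun_eq_iff)

lemma rig_comb_Un:
  "finite F \<Longrightarrow> finite G \<Longrightarrow> F \<inter> G = {} \<Longrightarrow>
     rig_comb d p c (F \<union> G) = rig_comb d p c F + rig_comb d p c G"
  by (simp add: rig_comb_def fun_eq_iff sum.union_disjoint)

lemma rig_comb_Int_Diff:
  "finite C \<Longrightarrow> rig_comb d p c C = rig_comb d p c (C \<inter> A) + rig_comb d p c (C - A)"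
  unfolding rig_comb_def plus_fun_def by (rule ext) (rule sum.Int_Diff)

lemma rig_comb_diff: "rig_comb d p (\<lambda>e. a e - b e) F = rig_comb d p a F - rig_comb d p b F"
  by (simp add: rig_comb_def fun_eq_iff left_diff_distrib sum_subtractf)

lemma rig_comb_cong: "(\<And>e. e \<in> F \<Longrightarrow> a e = b e) \<Longrightarrow> rig_comb d p a F = rig_comb d p b F"
  by (simp add: rig_comb_def)

lemma rig_comb_mono_neutral:
  "finite F \<Longrightarrow> G \<subseteq> F \<Longrightarrow> (\<And>e. e \<in> F - G \<Longrightarrow> c e = 0) \<Longrightarrow> rig_comb d p c F = rig_comb d p c G"
  unfolding rig_comb_def by (auto simp: fun_eq_iff intro!: sum.mono_neutral_right)

lemma rig_comb_in_span: "rig_comb d p c F \<in> real_fun.span (rig_row d p ` F)"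
proof -
  have "(\<Sum>e\<in>F. (\<lambda>col. c e * rig_row d p e col)) \<in> real_fun.span (rig_row d p ` F)"
    by (intro real_fun.span_sum real_fun.span_scale real_fun.span_base) auto
  then show ?thesis
    by (simp add: rig_comb_def sum_fun_eq)
qed

lemma span_rows_eq_combs:
  assumes "finite F"
  shows "real_fun.span (rig_row d p ` F) = range (\<lambda>c. rig_comb d p c F)"
proof
  show "range (\<lambda>c. rig_comb d p c F) \<subseteq> real_fun.span (rig_row d p ` F)"
    using rig_comb_in_span by blast
  show "real_fun.span (rig_row d p ` F) \<subseteq> range (\<lambda>c. rig_comb d p c F)"
    using assms
  proof (induction F rule: finite_induct)
    case empty
    then show ?case by (auto simp: rig_comb_def)
  next
    case (insert e F)
    show ?case
    proof
      fix w assume "w \<in> real_fun.span (rig_row d p ` insert e F)"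
      then obtain k where "(w - (\<lambda>col. k * rig_row d p e col)) \<in> real_fun.span (rig_row d p ` F)"
        by (auto simp: real_fun.span_insert)
      then obtain c where c: "w - (\<lambda>col. k * rig_row d p e col) = rig_comb d p c F"
        using insert.IH by blast
      have "rig_comb d p (c(e := k)) F = rig_comb d p c F"
        using insert.hyps by (intro rig_comb_cong) auto
      then have "w = rig_comb d p (c(e := k)) (insert e F)"
        using c insert.hyps by (simp add: rig_comb_insert algebra_simps)
      then show "w \<in> range (\<lambda>c. rig_comb d p c (insert e F))" by blast
    qed
  qed
qed

lemma span_rows_mono: "F \<subseteq> G \<Longrightarrow> real_fun.span (rig_row d p ` F) \<subseteq> real_fun.span (rig_row d p ` G)"
  by (intro real_fun.span_mono image_mono)

lemma span_rows_subset:
  "rig_row d p ` F \<subseteq> real_fun.span (rig_row d p ` G) \<Longrightarrow>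
     real_fun.span (rig_row d p ` F) \<subseteq> real_fun.span (rig_row d p ` G)"
  by (intro real_fun.span_minimal real_fun.subspace_span)

lemma rig_indep_subset:
  assumes "rig_indep d p F" "G \<subseteq> F"
  shows "rig_indep d p G"
  unfolding rig_indep_iff_comb
proof (intro conjI allI impI ballI)
  have fin: "finite F" using assms(1) by (simp add: rig_indep_def)
  then show "finite G" using assms(2) by (rule finite_subset[rotated])
  fix c e assume c: "rig_comb d p c G = 0" and e: "e \<in> G"
  let ?c = "\<lambda>e. if e \<in> G then c e else 0"
  have "rig_comb d p ?c F = rig_comb d p ?c G"
    using fin assms(2) by (intro rig_comb_mono_neutral) auto
  also have "\<dots> = rig_comb d p c G" by (rule rig_comb_cong) simp
  also have "\<dots> = 0" by (fact c)
  finally have "?c e = 0" using rig_indepD[OF assms(1)] e assms(2) by blast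
  then show "c e = 0" using e by simp
qed

lemma rig_indep_comb_unique:
  "rig_indep d p F \<Longrightarrow> rig_comb d p a F = rig_comb d p b F \<Longrightarrow> e \<in> F \<Longrightarrow> a e = b e"
  using rig_indepD[of d p F "\<lambda>e. a e - b e"] by (simp add: rig_comb_diff)

lemma rig_indep_inj_on:
  assumes "rig_indep d p I"
  shows "inj_on (rig_row d p) I"
proof (rule inj_onI, rule ccontr)
  fix e f assume ef: "e \<in> I" "f \<in> I" "rig_row d p e = rig_row d p f" "e \<noteq> f"
  let ?c = "\<lambda>g. if g = e then 1 else if g = f then -1 else (0::real)"
  have "finite I" using assms by (simp add: rig_indep_def)
  then have "rig_comb d p ?c I = rig_comb d p ?c {e, f}"
    using ef by (intro rig_comb_mono_neutral) auto
  also have "\<dots> = 0" using ef by (simp add: rig_comb_def fun_eq_iff)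
  finally have "?c e = 0" using rig_indepD[OF assms _ ef(1)] by blast
  then show False by simp
qed

lemma rig_indep_independent:
  assumes "rig_indep d p I"
  shows "real_fun.independent (rig_row d p ` I)"
proof (rule real_fun.independent_if_scalars_zero)
  have inj: "inj_on (rig_row d p) I" using rig_indep_inj_on[OF assms] .
  show "finite (rig_row d p ` I)" using assms by (simp add: rig_indep_def)
  fix g r assume "(\<Sum>x\<in>rig_row d p ` I. (\<lambda>col. g x * x col)) = 0" and r: "r \<in> rig_row d p ` I"
  then have "rig_comb d p (g \<circ> rig_row d p) I = 0"
    by (simp add: rig_comb_def sum.reindex[OF inj] sum_fun_eq)
  moreover obtain e where "e \<in> I" "r = rig_row d p e" using r by blast
  ultimately show "g r = 0" using rig_indepD[OF assms, of "g \<circ> rig_row d p" e] by simp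
qed

section \<open>Rank in the rigidity matroid\<close>

lemma row_in_span_if_insert_dependent:
  assumes I: "rig_indep d p I" and dep: "\<not> rig_indep d p (insert e I)"
  shows "rig_row d p e \<in> real_fun.span (rig_row d p ` I)"
proof -
  have fin: "finite I" and eI: "e \<notin> I" using I dep by (auto simp: rig_indep_def insert_absorb)
  then obtain c g where c: "rig_comb d p c (insert e I) = 0" and g: "g \<in> insert e I" "c g \<noteq> 0"
    using dep by (auto simp: rig_indep_iff_comb)
  have comb: "(\<lambda>col. c e * rig_row d p e col) + rig_comb d p c I = 0"
    using c fin eI by (simp add: rig_comb_insert)
  have "c e \<noteq> 0"
  proof
    assume "c e = 0"
    then have "rig_comb d p c I = 0" using comb by (simp add: fun_eq_iff)
    then have "\<forall>g\<in>I. c g = 0" using rig_indepD[OF I] by blast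
    then show False using g \<open>c e = 0\<close> by auto
  qed
  have Re: "rig_row d p e = (\<lambda>col. (- 1 / c e) * rig_comb d p c I col)"
  proof
    fix col
    have "c e * rig_row d p e col + rig_comb d p c I col = 0"
      using fun_cong[OF comb, of col] by simp
    then show "rig_row d p e col = (- 1 / c e) * rig_comb d p c I col"
      using \<open>c e \<noteq> 0\<close> by (simp add: field_simps)
  qed
  show ?thesis
    unfolding Re by (rule real_fun.span_scale[OF rig_comb_in_span])
qed

lemma finite_indep_subsets: "finite F \<Longrightarrow> finite {I. I \<subseteq> F \<and> rig_indep d p I}"
  by (rule finite_subset[of _ "Pow F"]) auto

lemma card_le_rig_rank:
  assumes "finite F" "I \<subseteq> F" "rig_indep d p I"
  shows "card I \<le> rig_rank d p F"
  unfolding rig_rank_def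
  by (rule Max_ge) (use assms finite_indep_subsets[OF assms(1)] in auto)

lemma rig_rank_attained:
  assumes "finite F"
  obtains I where "I \<subseteq> F" "rig_indep d p I" "card I = rig_rank d p F"
proof -
  let ?S = "{I. I \<subseteq> F \<and> rig_indep d p I}"
  have "finite (card ` ?S)" using finite_indep_subsets[OF assms] by (rule finite_imageI)
  moreover have "card ` ?S \<noteq> {}" by (auto simp: rig_indep_def)
  ultimately have "rig_rank d p F \<in> card ` ?S" unfolding rig_rank_def by (rule Max_in)
  then obtain I where "I \<in> ?S" "rig_rank d p F = card I" by (rule imageE)
  then show ?thesis by (intro that[of I]) simp_all
qed

lemma rig_rank_basis:
  assumes "finite F"
  obtains I where "I \<subseteq> F" "rig_indep d p I" "card I = rig_rank d p F"
    "rig_row d p ` F \<subseteq> real_fun.span (rig_row d p ` I)"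
proof -
  obtain I where I: "I \<subseteq> F" "rig_indep d p I" "card I = rig_rank d p F"
    by (rule rig_rank_attained[OF assms])
  have "rig_row d p e \<in> real_fun.span (rig_row d p ` I)" if e: "e \<in> F" for e
  proof (cases "e \<in> I")
    case True
    then show ?thesis by (intro real_fun.span_base) auto
  next
    case False
    have "finite I" using I(2) by (simp add: rig_indep_def)
    then have "\<not> card (insert e I) \<le> rig_rank d p F" using False I(3) by simp
    moreover have sub: "insert e I \<subseteq> F" using I(1) e by blast
    ultimately have "\<not> rig_indep d p (insert e I)" using card_le_rig_rank[OF assms sub] by blast
    then show ?thesis by (rule row_in_span_if_insert_dependent[OF I(2)])
  qed
  then have "rig_row d p ` F \<subseteq> real_fun.span (rig_row d p ` I)" by blast
  then show ?thesis by (rule that[OF I])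
qed

lemma rig_rank_le_card_spanning:
  assumes "finite F" "finite S" "rig_row d p ` F \<subseteq> real_fun.span (rig_row d p ` S)"
  shows "rig_rank d p F \<le> card S"
proof -
  obtain I where I: "I \<subseteq> F" "rig_indep d p I" "card I = rig_rank d p F"
    by (rule rig_rank_attained[OF assms(1)])
  have "rig_row d p ` I \<subseteq> real_fun.span (rig_row d p ` S)" using I(1) assms(3) by blast
  then have "card (rig_row d p ` I) \<le> card (rig_row d p ` S)"
    using real_fun.independent_span_bound[OF finite_imageI[OF assms(2)] rig_indep_independent[OF I(2)]]
    by simp
  also have "\<dots> \<le> card S" using assms(2) by (rule card_image_le)
  finally show ?thesis using I(3) card_image[OF rig_indep_inj_on[OF I(2)]] by linarith
qed

lemma rig_rank_indep:
  assumes "rig_indep d p I"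
  shows "rig_rank d p I = card I"
proof -
  have fin: "finite I" using assms by (simp add: rig_indep_def)
  obtain J where J: "J \<subseteq> I" "card J = rig_rank d p I"
    by (rule rig_rank_attained[OF fin])
  then have "rig_rank d p I \<le> card I" using card_mono[OF fin J(1)] by linarith
  moreover have "card I \<le> rig_rank d p I" using card_le_rig_rank[OF fin order.refl assms] .
  ultimately show ?thesis by simp
qed

lemma rig_indep_if_card_le_rank:
  assumes "finite F" "card F \<le> rig_rank d p F"
  shows "rig_indep d p F"
proof -
  obtain I where I: "I \<subseteq> F" "rig_indep d p I" "card I = rig_rank d p F"
    by (rule rig_rank_attained[OF assms(1)])
  then have "I = F" using card_subset_eq[OF assms(1) I(1)] card_mono[OF assms(1) I(1)] assms(2) by simp
  then show ?thesis using I(2) by simp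
qed

lemma span_rows_exchange:
  assumes I: "finite I" and z: "z \<in> real_fun.span (rig_row d p ` I)" "z \<noteq> 0"
  obtains f where "f \<in> I" "rig_row d p ` I \<subseteq> real_fun.span (insert z (rig_row d p ` (I - {f})))"
proof -
  obtain a where a: "z = rig_comb d p a I" using z(1) span_rows_eq_combs[OF I] by blast
  have "\<exists>f\<in>I. a f \<noteq> 0"
  proof (rule ccontr)
    assume "\<not> (\<exists>f\<in>I. a f \<noteq> 0)"
    then have "z = 0" unfolding a by (simp add: rig_comb_def fun_eq_iff)
    then show False using z(2) by simp
  qed
  then obtain f where f: "f \<in> I" "a f \<noteq> 0" by blast
  let ?S = "real_fun.span (insert z (rig_row d p ` (I - {f})))"
  have split_I: "rig_comb d p a I = (\<lambda>col. a f * rig_row d p f col) + rig_comb d p a (I - {f})"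
    using rig_comb_insert[of "I - {f}" f d p a] I f(1) by (simp add: insert_absorb)
  have z_split: "z col = a f * rig_row d p f col + rig_comb d p a (I - {f}) col" for col
    using fun_cong[OF split_I, of col] unfolding a by simp
  have Rf: "rig_row d p f = (\<lambda>col. (1 / a f) * (z - rig_comb d p a (I - {f})) col)"
  proof
    fix col
    show "rig_row d p f col = (1 / a f) * (z - rig_comb d p a (I - {f})) col"
      using z_split[of col] f(2) by (simp add: field_simps)
  qed
  have "z \<in> ?S" by (rule real_fun.span_base) simp
  moreover have "rig_comb d p a (I - {f}) \<in> ?S"
    using rig_comb_in_span real_fun.span_mono[OF subset_insertI] by blast
  ultimately have "rig_row d p f \<in> ?S"
    unfolding Rf by (intro real_fun.span_scale real_fun.span_diff)
  moreover have "rig_row d p ` (I - {f}) \<subseteq> ?S" by (intro subset_trans[OF _ real_fun.span_superset]) blast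
  ultimately have "rig_row d p ` I \<subseteq> ?S" using f(1) by blast
  with f(1) show ?thesis by (rule that)
qed

lemma rig_rank_Un_shared:
  assumes A: "finite A" and B: "finite B"
    and z: "z \<in> real_fun.span (rig_row d p ` A)" "z \<in> real_fun.span (rig_row d p ` B)" "z \<noteq> 0"
  shows "rig_rank d p (A \<union> B) + 1 \<le> rig_rank d p A + rig_rank d p B"
proof -
  let ?span = "\<lambda>F. real_fun.span (rig_row d p ` F)"
  obtain IA where IA: "IA \<subseteq> A" "rig_indep d p IA" "card IA = rig_rank d p A"
    "rig_row d p ` A \<subseteq> ?span IA"
    by (rule rig_rank_basis[OF A])
  obtain IB where IB: "IB \<subseteq> B" "rig_indep d p IB" "card IB = rig_rank d p B"
    "rig_row d p ` B \<subseteq> ?span IB"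
    by (rule rig_rank_basis[OF B])
  have finIA: "finite IA" and finIB: "finite IB" using IA(2) IB(2) by (auto simp: rig_indep_def)
  have "z \<in> ?span IA" using z(1) span_rows_subset[OF IA(4)] by blast
  then obtain f where f: "f \<in> IA"
    and exchange: "rig_row d p ` IA \<subseteq> real_fun.span (insert z (rig_row d p ` (IA - {f})))"
    using span_rows_exchange[OF finIA _ z(3)] by blast
  define T where "T = IB \<union> (IA - {f})"
  have "z \<in> ?span T"
    using z(2) span_rows_subset[OF IB(4)] span_rows_mono[of IB T d p] by (auto simp: T_def)
  moreover have "rig_row d p ` (IA - {f}) \<subseteq> ?span T"
    by (intro subset_trans[OF _ real_fun.span_superset]) (auto simp: T_def)
  ultimately have "real_fun.span (insert z (rig_row d p ` (IA - {f}))) \<subseteq> ?span T"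
    by (intro real_fun.span_minimal real_fun.subspace_span) auto
  with exchange have "rig_row d p ` IA \<subseteq> ?span T" by (rule subset_trans)
  then have "?span IA \<subseteq> ?span T" by (rule span_rows_subset)
  moreover have "?span IB \<subseteq> ?span T" by (rule span_rows_mono) (auto simp: T_def)
  ultimately have "rig_row d p ` (A \<union> B) \<subseteq> ?span T" using IA(4) IB(4) by blast
  then have "rig_rank d p (A \<union> B) \<le> card T"
    using A B finIA finIB by (intro rig_rank_le_card_spanning) (auto simp: T_def)
  moreover have "card T \<le> card IB + card (IA - {f})" by (simp add: T_def card_Un_le)
  moreover have "card IA = Suc (card (IA - {f}))" using card.remove[OF finIA f] .
  ultimately show ?thesis using IA(3) IB(3) by linarith
qed

lemma rig_circuit_dependence:
  assumes "rig_circuit d p C"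
  obtains c where "rig_comb d p c C = 0" "\<forall>e\<in>C. c e \<noteq> 0"
proof -
  have fin: "finite C" and dep: "\<not> rig_indep d p C"
    and minimal: "\<And>C'. C' \<subset> C \<Longrightarrow> rig_indep d p C'"
    using assms by (auto simp: rig_circuit_def)
  obtain c e0 where c: "rig_comb d p c C = 0" and e0: "e0 \<in> C" "c e0 \<noteq> 0"
    using dep fin by (auto simp: rig_indep_iff_comb)
  let ?T = "{e\<in>C. c e \<noteq> 0}"
  have "rig_comb d p c ?T = rig_comb d p c C"
    using fin by (intro rig_comb_mono_neutral[symmetric]) auto
  then have T0: "rig_comb d p c ?T = 0" using c by simp
  have "e0 \<in> ?T" using e0 by simp
  have "\<not> rig_indep d p ?T"
  proof
    assume "rig_indep d p ?T"
    then have "c e0 = 0" using T0 \<open>e0 \<in> ?T\<close> by (rule rig_indepD)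
    with e0(2) show False by contradiction
  qed
  have "?T = C"
  proof (rule ccontr)
    assume "?T \<noteq> C"
    then have "?T \<subset> C" by auto
    with minimal \<open>\<not> rig_indep d p ?T\<close> show False by blast
  qed
  then have "\<forall>e\<in>C. c e \<noteq> 0" by auto
  then show ?thesis by (rule that[OF c])
qed

section \<open>Equilibrium loads and generic placements\<close>

lemma rig_row_apply:
  "rig_row d p e (x, i) = (if x \<in> e \<and> i < d then \<Sum>y\<in>e. p x i - p y i else 0)"
  by (simp add: rig_row_def)

lemma double_sum_antisym:
  fixes g :: "'a \<Rightarrow> 'a \<Rightarrow> real"
  assumes "\<And>x y. g y x = - g x y"
  shows "(\<Sum>x\<in>A. \<Sum>y\<in>A. g x y) = 0"
proof -
  have "(\<Sum>x\<in>A. \<Sum>y\<in>A. g x y) = (\<Sum>y\<in>A. \<Sum>x\<in>A. g x y)" by (rule sum.swap)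
  also have "\<dots> = (\<Sum>y\<in>A. \<Sum>x\<in>A. - g y x)"
    by (intro sum.cong refl) (rule assms)
  also have "\<dots> = - (\<Sum>x\<in>A. \<Sum>y\<in>A. g x y)"
    by (simp add: sum_negf)
  finally show ?thesis by simp
qed

text \<open>A load w places the force w(x, 0..d-1) at the point p x. It is in equilibrium on W if
  its resultant and its moment in every coordinate plane vanish, i.e. if it annihilates the
  infinitesimal translations and rotations of p on W.\<close>
definition rig_equilibrium :: "nat \<Rightarrow> ('v \<Rightarrow> nat \<Rightarrow> real) \<Rightarrow> 'v set \<Rightarrow> ('v \<times> nat \<Rightarrow> real) \<Rightarrow> bool" where
  "rig_equilibrium d p W w \<longleftrightarrow>
     (\<forall>x i. d \<le> i \<longrightarrow> w (x, i) = 0) \<and>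
     (\<forall>i<d. (\<Sum>x\<in>W. w (x, i)) = 0) \<and>
     (\<forall>i<d. \<forall>j<d. (\<Sum>x\<in>W. w (x, i) * p x j - w (x, j) * p x i) = 0)"

lemma subspace_rig_equilibrium: "real_fun.subspace {w. rig_equilibrium d p W w}"
proof (rule real_fun.subspaceI)
  show "0 \<in> {w. rig_equilibrium d p W w}" by (simp add: rig_equilibrium_def)
next
  fix w w' assume "w \<in> {w. rig_equilibrium d p W w}" "w' \<in> {w. rig_equilibrium d p W w}"
  moreover have "(\<Sum>x\<in>W. (w + w') (x, i) * p x j - (w + w') (x, j) * p x i)
      = (\<Sum>x\<in>W. w (x, i) * p x j - w (x, j) * p x i) + (\<Sum>x\<in>W. w' (x, i) * p x j - w' (x, j) * p x i)"
    for i j by (subst sum.distrib[symmetric]) (rule sum.cong; simp add: algebra_simps)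
  ultimately show "w + w' \<in> {w. rig_equilibrium d p W w}"
    by (simp add: rig_equilibrium_def sum.distrib)
next
  fix r :: real and w assume "w \<in> {w. rig_equilibrium d p W w}"
  moreover have "(\<Sum>x\<in>W. r * w (x, i) * p x j - r * w (x, j) * p x i)
      = r * (\<Sum>x\<in>W. w (x, i) * p x j - w (x, j) * p x i)" for i j
    by (simp add: sum_distrib_left algebra_simps)
  ultimately show "(\<lambda>col. r * w col) \<in> {w. rig_equilibrium d p W w}"
    by (simp add: rig_equilibrium_def sum_distrib_left[symmetric] mult.assoc)
qed

lemma rig_row_equilibrium:
  assumes "finite W" "e \<subseteq> W"
  shows "rig_equilibrium d p W (rig_row d p e)"
proof -
  have on_e: "(\<Sum>x\<in>W. if x \<in> e then h x else 0) = (\<Sum>x\<in>e. h x)" for h :: "'a \<Rightarrow> real"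
    using assms by (simp add: sum.inter_restrict[symmetric] Int_absorb1)
  have force: "(\<Sum>x\<in>W. rig_row d p e (x, i)) = 0" if "i < d" for i
    using that on_e[of "\<lambda>x. \<Sum>y\<in>e. p x i - p y i"]
    by (simp add: rig_row_apply double_sum_antisym)
  have moment: "(\<Sum>x\<in>W. rig_row d p e (x, i) * p x j - rig_row d p e (x, j) * p x i) = 0"
    if "i < d" "j < d" for i j
  proof -
    let ?g = "\<lambda>x y. (p x i - p y i) * p x j - (p x j - p y j) * p x i"
    have "rig_row d p e (x, i) * p x j - rig_row d p e (x, j) * p x i
        = (if x \<in> e then \<Sum>y\<in>e. ?g x y else 0)" for x
    proof (cases "x \<in> e")
      case True
      have "(\<Sum>y\<in>e. p x i - p y i) * p x j - (\<Sum>y\<in>e. p x j - p y j) * p x i = (\<Sum>y\<in>e. ?g x y)"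
        by (simp only: sum_distrib_right sum_subtractf[symmetric])
      then show ?thesis by (simp only: rig_row_apply True that simp_thms if_True)
    qed (simp add: rig_row_apply)
    then have "(\<Sum>x\<in>W. rig_row d p e (x, i) * p x j - rig_row d p e (x, j) * p x i)
        = (\<Sum>x\<in>e. \<Sum>y\<in>e. ?g x y)"
      using on_e by simp
    also have "\<dots> = 0" by (rule double_sum_antisym) (simp add: algebra_simps)
    finally show ?thesis .
  qed
  show ?thesis using force moment by (simp add: rig_equilibrium_def rig_row_apply)
qed

lemma span_rows_equilibrium:
  assumes "finite W" "\<forall>e\<in>F. e \<subseteq> W" "w \<in> real_fun.span (rig_row d p ` F)"
  shows "rig_equilibrium d p W w"
proof -
  have "w \<in> {w. rig_equilibrium d p W w}"
    using assms(3) subspace_rig_equilibrium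
  proof (rule real_fun.span_subspace_induct)
    fix r assume "r \<in> rig_row d p ` F"
    then obtain e where "e \<in> F" "r = rig_row d p e" by blast
    then show "r \<in> {w. rig_equilibrium d p W w}"
      using rig_row_equilibrium[OF assms(1)] assms(2) by simp
  qed
  then show ?thesis by simp
qed

lemma span_rows_vanish:
  assumes "\<forall>e\<in>F. x \<notin> e" "w \<in> real_fun.span (rig_row d p ` F)"
  shows "w (x, i) = 0"
proof -
  have "real_fun.subspace {w. w (x, i) = 0}" by (simp add: real_fun.subspace_def)
  with assms(2) have "w \<in> {w. w (x, i) = 0}"
    by (rule real_fun.span_subspace_induct) (use assms(1) in \<open>auto simp: rig_row_apply\<close>)
  then show ?thesis by simp
qed

lemma rig_equilibrium_two_points:
  assumes eq: "rig_equilibrium d p W w" and W: "finite W" "u \<in> W" "v \<in> W"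
    and i0: "i0 < d" "p u i0 \<noteq> p v i0"
    and supp: "\<And>x i. x \<noteq> u \<Longrightarrow> x \<noteq> v \<Longrightarrow> w (x, i) = 0"
  shows "\<exists>l. w = (\<lambda>col. l * rig_row d p {u, v} col)"
proof -
  have uv: "u \<noteq> v" using i0 by auto
  have on_uv: "(\<Sum>x\<in>W. h x) = h u + h v" if "\<And>x. x \<noteq> u \<Longrightarrow> x \<noteq> v \<Longrightarrow> h x = 0" for h :: "'a \<Rightarrow> real"
  proof -
    have "(\<Sum>x\<in>W. h x) = (\<Sum>x\<in>{u, v}. h x)"
      using W that by (intro sum.mono_neutral_right) auto
    then show ?thesis using uv by simp
  qed
  have force: "w (v, i) = - w (u, i)" if "i < d" for i
    using eq that on_uv[of "\<lambda>x. w (x, i)"] supp by (auto simp: rig_equilibrium_def)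
  have moment: "w (u, i) * (p u j - p v j) = w (u, j) * (p u i - p v i)" if "i < d" "j < d" for i j
  proof -
    have "w (u, i) * p u j - w (u, j) * p u i + (w (v, i) * p v j - w (v, j) * p v i) = 0"
      using eq that on_uv[of "\<lambda>x. w (x, i) * p x j - w (x, j) * p x i"] supp
      by (auto simp: rig_equilibrium_def)
    then show ?thesis using force that by (simp add: algebra_simps)
  qed
  define l where "l = w (u, i0) / (p u i0 - p v i0)"
  have wu: "w (u, j) = l * (p u j - p v j)" if "j < d" for j
  proof -
    have "p u i0 - p v i0 \<noteq> 0" using i0(2) by simp
    then have "w (u, j) = w (u, j) * (p u i0 - p v i0) / (p u i0 - p v i0)" by simp
    also have "\<dots> = l * (p u j - p v j)" unfolding l_def moment[OF i0(1) that, symmetric] by simp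
    finally show ?thesis .
  qed
  have "w (x, j) = l * rig_row d p {u, v} (x, j)" for x j
  proof (cases "j < d")
    case True
    then show ?thesis
      using wu[OF True] force[OF True] supp[of x j] uv by (auto simp: rig_row_apply algebra_simps)
  next
    case False
    then show ?thesis using eq by (simp add: rig_equilibrium_def rig_row_apply)
  qed
  then show ?thesis by (auto simp: fun_eq_iff)
qed

lemma generic_points_distinct:
  assumes "generic d V p" "a \<in> V" "b \<in> V" "a \<noteq> b" "i < d"
  shows "p a i \<noteq> p b i"
proof
  assume eq: "p a i = p b i"
  \<comment> \<open>The nonzero polynomial X(a,i) - X(b,i) vanishes at p.\<close>
  define ma :: "'a \<times> nat \<Rightarrow> nat" where "ma = (\<lambda>j. if j = (a, i) then 1 else 0)"
  define mb :: "'a \<times> nat \<Rightarrow> nat" where "mb = (\<lambda>j. if j = (b, i) then 1 else 0)"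
  have "ma \<noteq> mb" using assms(4) by (auto simp: ma_def mb_def fun_eq_iff)
  define c :: "('a \<times> nat \<Rightarrow> nat) \<Rightarrow> rat" where "c = (\<lambda>m. if m = ma then 1 else if m = mb then -1 else 0)"
  have c_supp: "{m. c m \<noteq> 0} = {ma, mb}" using \<open>ma \<noteq> mb\<close> by (auto simp: c_def)
  have ma_supp: "{j. ma j \<noteq> 0} = {(a, i)}" and mb_supp: "{j. mb j \<noteq> 0} = {(b, i)}"
    by (auto simp: ma_def mb_def)
  have "finite {m. c m \<noteq> 0} \<and>
      (\<forall>m. c m \<noteq> 0 \<longrightarrow> finite {j. m j \<noteq> 0} \<and> {j. m j \<noteq> 0} \<subseteq> V \<times> {..<d}) \<and> (\<exists>m. c m \<noteq> 0)"
  proof (intro conjI allI impI)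
    show "finite {m. c m \<noteq> 0}" unfolding c_supp by simp
    show "\<exists>m. c m \<noteq> 0" using c_supp by auto
    fix m assume "c m \<noteq> 0"
    then have "m \<in> {ma, mb}" unfolding c_supp[symmetric] by simp
    then have "{j. m j \<noteq> 0} = {(a, i)} \<or> {j. m j \<noteq> 0} = {(b, i)}"
      using ma_supp mb_supp by blast
    then show "finite {j. m j \<noteq> 0}" "{j. m j \<noteq> 0} \<subseteq> V \<times> {..<d}"
      using assms(2,3,5) by (elim disjE; simp)+
  qed
  with spec[OF assms(1)[unfolded generic_def alg_indep_over_rat_def], of c]
  have "(\<Sum>m | c m \<noteq> 0. of_rat (c m) * (\<Prod>j | m j \<noteq> 0. (\<lambda>(w, i). p w i) j ^ m j)) \<noteq> 0"
    by (rule mp)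
  moreover have "(\<Sum>m | c m \<noteq> 0. of_rat (c m) * (\<Prod>j | m j \<noteq> 0. (\<lambda>(w, i). p w i) j ^ m j))
      = p a i - p b i"
    unfolding c_supp using \<open>ma \<noteq> mb\<close> by (simp add: ma_supp mb_supp c_def ma_def mb_def)
  ultimately show False using eq by simp
qed

section \<open>Graphical parallel connections\<close>

lemma is_graph_edge_subset: "is_graph V D \<Longrightarrow> e \<in> D \<Longrightarrow> e \<subseteq> V"
  by (auto simp: is_graph_def)

lemma is_graph_edge_subset_pair:
  assumes "is_graph V D" "e \<in> D" "e \<subseteq> {u, v}"
  shows "e = {u, v}"
proof -
  obtain a b where "a \<noteq> b" "e = {a, b}" using assms(1,2) unfolding is_graph_def by blast
  with assms(3) show ?thesis by auto
qed

lemma is_graph_insert_edge: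
  assumes "is_graph V D" "A \<subseteq> D" "finite W" "\<Union>A \<subseteq> W" "u \<in> W" "v \<in> W" "u \<noteq> v"
  shows "is_graph W (insert {u, v} A)"
proof -
  have "\<exists>a b. a \<noteq> b \<and> a \<in> W \<and> b \<in> W \<and> e = {a, b}" if e: "e \<in> A" for e
  proof -
    have "e \<in> D" using e assms(2) by blast
    then obtain a b where ab: "a \<noteq> b" "e = {a, b}" using assms(1) unfolding is_graph_def by blast
    moreover have "a \<in> W" "b \<in> W" using e ab(2) assms(4) by blast+
    ultimately show ?thesis by blast
  qed
  then show ?thesis using assms(3,5-7) by (auto simp: is_graph_def)
qed

lemma vertex_sets_meet:
  assumes "\<Union>A \<inter> Y = {}" "\<Union>B \<inter> X = {}" "X \<inter> Y = {}"
    and "\<And>e f. e \<in> A \<Longrightarrow> f \<in> B \<Longrightarrow> e \<inter> f \<subseteq> {u, v}"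
  shows "({u, v} \<union> \<Union>A \<union> X) \<inter> ({u, v} \<union> \<Union>B \<union> Y) = {u, v}"
proof
  show "({u, v} \<union> \<Union>A \<union> X) \<inter> ({u, v} \<union> \<Union>B \<union> Y) \<subseteq> {u, v}"
  proof
    fix x assume x: "x \<in> ({u, v} \<union> \<Union>A \<union> X) \<inter> ({u, v} \<union> \<Union>B \<union> Y)"
    show "x \<in> {u, v}"
    proof (cases "x \<in> \<Union>A \<and> x \<in> \<Union>B")
      case True
      then obtain e f where "e \<in> A" "f \<in> B" "x \<in> e" "x \<in> f" by blast
      then show ?thesis using assms(4) by blast
    next
      case False
      then show ?thesis using x assms(1-3) by blast
    qed
  qed
qed auto

lemma parallel_connection_of_separated_parts:
  fixes As :: "'v set set list"
  assumes G: "is_graph V D" and uv: "u \<in> V" "v \<in> V" "u \<noteq> v"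
    and As: "distinct As" "As \<noteq> []"
    and parts: "\<And>A. A \<in> set As \<Longrightarrow> A \<subseteq> D" "\<And>A. A \<in> set As \<Longrightarrow> {u, v} \<notin> A"
    and cover: "D \<subseteq> insert {u, v} (\<Union>(set As))"
    and separated: "\<And>A B e f. A \<in> set As \<Longrightarrow> B \<in> set As \<Longrightarrow> A \<noteq> B \<Longrightarrow> e \<in> A \<Longrightarrow> f \<in> B \<Longrightarrow>
      e \<inter> f \<subseteq> {u, v}"
  shows "\<exists>Hs. map snd Hs = map (insert {u, v}) As \<and>
           parallel_connection Hs u v V (\<Union>A\<in>set As. insert {u, v} A)"
proof -
  \<comment> \<open>The vertices of V that lie on no edge of D go to the first graph.\<close>
  define W where "W A = {u, v} \<union> \<Union>A \<union> (if A = hd As then V - \<Union>D else {})" for A :: "'v set set"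
  define Hs where "Hs = map (\<lambda>A. (W A, insert {u, v} A)) As"
  have W_V: "W A \<subseteq> V" if "A \<in> set As" for A
  proof -
    have "\<Union>A \<subseteq> V" using is_graph_edge_subset[OF G] parts(1)[OF that] by blast
    then show ?thesis using uv by (simp add: W_def)
  qed
  have graph: "is_graph (W A) (insert {u, v} A)" if A: "A \<in> set As" for A
  proof (rule is_graph_insert_edge[OF G parts(1)[OF A] _ _ _ _ uv(3)])
    show "finite (W A)" using W_V[OF A] G finite_subset by (auto simp: is_graph_def)
  qed (auto simp: W_def)
  have disjoint: "A \<inter> B = {}" if AB: "A \<in> set As" "B \<in> set As" "A \<noteq> B" for A B
  proof -
    have "e \<notin> B" if e: "e \<in> A" for e
    proof
      assume "e \<in> B"
      then have "e \<subseteq> {u, v}" using separated[OF AB e \<open>e \<in> B\<close>] by simp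
      moreover have "e \<in> D" using parts(1)[OF AB(1)] e by blast
      ultimately have "e = {u, v}" using is_graph_edge_subset_pair[OF G] by blast
      then show False using parts(2)[OF AB(1)] e by simp
    qed
    then show ?thesis by blast
  qed
  have vertices_meet: "W A \<inter> W B = {u, v}" if AB: "A \<in> set As" "B \<in> set As" "A \<noteq> B" for A B
    unfolding W_def
  proof (rule vertex_sets_meet)
    have "\<Union>A \<subseteq> \<Union>D" "\<Union>B \<subseteq> \<Union>D" using parts(1)[OF AB(1)] parts(1)[OF AB(2)] by auto
    then show "\<Union>A \<inter> (if B = hd As then V - \<Union>D else {}) = {}"
      "\<Union>B \<inter> (if A = hd As then V - \<Union>D else {}) = {}" by auto
    show "(if A = hd As then V - \<Union>D else {}) \<inter> (if B = hd As then V - \<Union>D else {}) = {}"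
      using AB(3) by auto
  qed (rule separated[OF AB])
  have covers: "V = (\<Union>A\<in>set As. W A)"
  proof
    show "(\<Union>A\<in>set As. W A) \<subseteq> V" using W_V by blast
    have hd: "hd As \<in> set As" using As(2) by simp
    show "V \<subseteq> (\<Union>A\<in>set As. W A)"
    proof
      fix x assume x: "x \<in> V"
      show "x \<in> (\<Union>A\<in>set As. W A)"
      proof (cases "x \<in> \<Union>D")
        case True
        then obtain e where "e \<in> D" "x \<in> e" by blast
        then consider "e = {u, v}" | A where "A \<in> set As" "e \<in> A" using cover by blast
        then show ?thesis
        proof cases
          case 1
          then have "x \<in> W (hd As)" using \<open>x \<in> e\<close> unfolding W_def by auto
          then show ?thesis using hd by blast
        next
          case 2
          then have "x \<in> W A" using \<open>x \<in> e\<close> unfolding W_def by blast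
          then show ?thesis using 2 by blast
        qed
      next
        case False
        then have "x \<in> W (hd As)" using x unfolding W_def by simp
        then show ?thesis using hd by blast
      qed
    qed
  qed
  have "parallel_connection Hs u v V (\<Union>A\<in>set As. insert {u, v} A)"
    unfolding parallel_connection_def
  proof (intro conjI allI impI ballI)
    fix i j assume "i < length Hs" "j < length Hs" "i \<noteq> j"
    then have "As ! i \<in> set As" "As ! j \<in> set As" "As ! i \<noteq> As ! j"
      using As(1) by (auto simp: Hs_def nth_eq_iff_index_eq)
    then show "fst (Hs ! i) \<inter> fst (Hs ! j) = {u, v}" "snd (Hs ! i) \<inter> snd (Hs ! j) = {{u, v}}"
      using vertices_meet disjoint \<open>i < length Hs\<close> \<open>j < length Hs\<close> by (auto simp: Hs_def)
  qed (use graph covers in \<open>auto simp: Hs_def\<close>)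
  moreover have "map snd Hs = map (insert {u, v}) As" by (simp add: Hs_def)
  ultimately show ?thesis by blast
qed

section \<open>A k-fold circuit with two technicolour vertices\<close>

locale two_technicolour_kfold_circuit =
  fixes d k :: nat and V :: "'v set" and D :: "'v set set"
    and p :: "'v \<Rightarrow> nat \<Rightarrow> real" and P :: "'v set set set" and u v :: 'v
  assumes graph: "is_graph V D"
    and connected: "rig_connected d p D"
    and kfold: "kfold_circuit d p k D"
    and partition: "principal_partition d p k D P"
    and technicolours: "{w \<in> V. technicolour P w} = {u, v}"
    and distinct_points: "\<exists>i<d. p u i \<noteq> p v i"
begin

abbreviation "e0 \<equiv> {u, v}"

lemma finite_V: "finite V"
  using graph by (simp add: is_graph_def)

lemma edge_subset_V: "e \<in> D \<Longrightarrow> e \<subseteq> V"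
  using graph by (rule is_graph_edge_subset)

lemma finite_D: "finite D"
  using kfold by (simp add: kfold_circuit_def)

lemma u_in_V: "u \<in> V" and v_in_V: "v \<in> V"
  using technicolours by auto

lemma u_neq_v: "u \<noteq> v"
  using distinct_points by auto

lemma rank_D: "rig_rank d p D + k = card D"
  using kfold by (simp add: kfold_circuit_def)

lemma Union_P: "\<Union>P = D"
  and part_nonempty: "A \<in> P \<Longrightarrow> A \<noteq> {}"
  and parts_disjoint: "A \<in> P \<Longrightarrow> B \<in> P \<Longrightarrow> A \<noteq> B \<Longrightarrow> A \<inter> B = {}"
  using partition by (auto simp: principal_partition_def)

lemma part_subset: "A \<in> P \<Longrightarrow> A \<subseteq> D"
  using Union_P by blast

lemma finite_P: "finite P" and finite_part: "A \<in> P \<Longrightarrow> finite A"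
  using Union_P finite_D by (auto simp: finite_UnionD intro: finite_subset)

lemma rank_complement: "A \<in> P \<Longrightarrow> rig_rank d p (D - A) + (k - 1) = card (D - A)"
  using partition by (auto simp: principal_partition_def kfold_circuit_def)

lemma edge_separation:
  assumes "A \<in> P" "e \<in> A" "f \<in> D - A" "x \<in> e" "x \<in> f"
  shows "x = u \<or> x = v"
proof -
  obtain B where "B \<in> P" "f \<in> B" using Union_P assms(3) by blast
  then have "technicolour P x" unfolding technicolour_def using assms by blast
  moreover have "x \<in> V" using edge_subset_V assms(2,4) part_subset[OF assms(1)] by blast
  ultimately show ?thesis using technicolours by blast
qed

lemma exists_other_part: "\<exists>B\<in>P. B \<noteq> A"
proof -
  have "technicolour P u" using technicolours by blast
  then obtain B1 B2 where "B1 \<in> P" "B2 \<in> P" "B1 \<noteq> B2" unfolding technicolour_def by blast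
  then show ?thesis by (cases "B1 = A") auto
qed

lemma row_e0_nonzero: "rig_row d p e0 \<noteq> 0"
proof
  obtain i where "i < d" "p u i \<noteq> p v i" using distinct_points by blast
  moreover assume "rig_row d p e0 = 0"
  then have "rig_row d p e0 (u, i) = 0" by simp
  ultimately show False by (simp add: rig_row_apply u_neq_v)
qed

text \<open>A vertex other than u and v only meets edges of one part, so a vector in the row
  spaces of both A and its complement is a load supported on {u, v}.\<close>
lemma span_part_inter_complement:
  assumes A: "A \<in> P"
    and w: "w \<in> real_fun.span (rig_row d p ` A)" "w \<in> real_fun.span (rig_row d p ` (D - A))"
  shows "\<exists>l. w = (\<lambda>col. l * rig_row d p e0 col)"
proof -
  obtain i0 where i0: "i0 < d" "p u i0 \<noteq> p v i0" using distinct_points by blast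
  have eq: "rig_equilibrium d p V w"
    using span_rows_equilibrium[OF finite_V _ w(1)] edge_subset_V part_subset[OF A] by blast
  have supp: "w (x, i) = 0" if "x \<noteq> u" "x \<noteq> v" for x i
  proof (cases "\<exists>e\<in>A. x \<in> e")
    case True
    then have "\<forall>f\<in>D - A. x \<notin> f" using edge_separation[OF A] that by blast
    then show ?thesis using w(2) by (rule span_rows_vanish)
  next
    case False
    then have "\<forall>e\<in>A. x \<notin> e" by blast
    then show ?thesis using w(1) by (rule span_rows_vanish)
  qed
  show ?thesis using eq finite_V u_in_V v_in_V i0 supp by (rule rig_equilibrium_two_points)
qed

lemma dependence_restrict_part:
  assumes C: "finite C" "C \<subseteq> D" and c: "rig_comb d p c C = 0" and A: "A \<in> P"
  shows "\<exists>l. rig_comb d p c (C \<inter> A) = (\<lambda>col. l * rig_row d p e0 col)"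
proof (rule span_part_inter_complement[OF A])
  have "rig_comb d p c (C \<inter> A) = - rig_comb d p c (C - A)"
    using rig_comb_Int_Diff[OF C(1), of d p c A] c by (simp add: eq_neg_iff_add_eq_0)
  also have "\<dots> \<in> real_fun.span (rig_row d p ` (D - A))"
    using rig_comb_in_span[of d p c "C - A"] span_rows_mono[of "C - A" "D - A" d p] C(2)
    by (intro real_fun.span_neg) blast
  finally show "rig_comb d p c (C \<inter> A) \<in> real_fun.span (rig_row d p ` (D - A))" .
  show "rig_comb d p c (C \<inter> A) \<in> real_fun.span (rig_row d p ` A)"
    using rig_comb_in_span span_rows_mono[of "C \<inter> A" A d p] by blast
qed

text \<open>Connectivity: the dependence of a circuit through f and through an edge outside A
  restricts on A to a nonzero multiple of the row of e0.\<close>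
lemma row_e0_comb_part:
  assumes A: "A \<in> P" and f: "f \<in> A"
  shows "\<exists>c. rig_comb d p c A = rig_row d p e0 \<and> c f \<noteq> 0"
proof -
  obtain B where B: "B \<in> P" "B \<noteq> A" using exists_other_part by blast
  obtain g where g: "g \<in> B" using part_nonempty[OF B(1)] by blast
  have gA: "g \<notin> A" using parts_disjoint[OF A B(1)] B(2) g by blast
  have "f \<in> D" "g \<in> D" "f \<noteq> g" using part_subset A B f g gA by blast+
  then obtain C where C: "C \<subseteq> D" "rig_circuit d p C" "f \<in> C" "g \<in> C"
    using connected unfolding rig_connected_def by blast
  have finC: "finite C" using C(2) by (simp add: rig_circuit_def)
  obtain c where c: "rig_comb d p c C = 0" "\<forall>e\<in>C. c e \<noteq> 0"
    using rig_circuit_dependence[OF C(2)] by blast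
  obtain l where l: "rig_comb d p c (C \<inter> A) = (\<lambda>col. l * rig_row d p e0 col)"
    using dependence_restrict_part[OF finC C(1) c(1) A] by blast
  have "l \<noteq> 0"
  proof
    assume "l = 0"
    then have "rig_comb d p c (C \<inter> A) = 0" using l by (simp add: fun_eq_iff)
    moreover have "rig_indep d p (C \<inter> A)"
      using C(2) C(4) gA unfolding rig_circuit_def by blast
    ultimately have "c f = 0" using rig_indepD C(3) f by blast
    then show False using c(2) C(3) by blast
  qed
  let ?c = "\<lambda>e. if e \<in> C then c e / l else 0"
  have "rig_comb d p ?c A = rig_comb d p ?c (C \<inter> A)"
    using finite_part[OF A] by (intro rig_comb_mono_neutral) auto
  also have "\<dots> = rig_row d p e0"
    using l \<open>l \<noteq> 0\<close> by (auto simp: rig_comb_def fun_eq_iff sum_divide_distrib[symmetric] dest: fun_cong)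
  finally show ?thesis using c(2) C(3) \<open>l \<noteq> 0\<close> by auto
qed

lemma row_e0_in_span_part: "A \<in> P \<Longrightarrow> rig_row d p e0 \<in> real_fun.span (rig_row d p ` A)"
  using row_e0_comb_part part_nonempty rig_comb_in_span by (metis ex_in_conv)

text \<open>This is where the (k-1)-fold circuits D - A enter: with r(D) = |D| - k and
  r(D - A) = |D - A| - (k - 1), the shared row of e0 in r(D) + 1 \<le> r(A) + r(D - A)
  leaves no room for a dependence in A.\<close>
lemma part_indep: "A \<in> P \<Longrightarrow> rig_indep d p A"
proof -
  assume A: "A \<in> P"
  obtain B where B: "B \<in> P" "B \<noteq> A" using exists_other_part by blast
  have "B \<subseteq> D - A" using part_subset[OF B(1)] parts_disjoint[OF A B(1)] B(2) by blast
  then have "rig_row d p e0 \<in> real_fun.span (rig_row d p ` (D - A))"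
    using row_e0_in_span_part[OF B(1)] span_rows_mono[of B "D - A" d p] by blast
  moreover have "A \<union> (D - A) = D" using part_subset[OF A] by blast
  ultimately have "rig_rank d p D + 1 \<le> rig_rank d p A + rig_rank d p (D - A)"
    using finite_part[OF A] finite_D row_e0_in_span_part[OF A] row_e0_nonzero
      rig_rank_Un_shared[of A "D - A" "rig_row d p e0" d p] by simp
  moreover have "card D = card A + card (D - A)"
    using part_subset[OF A] finite_D by (metis card_Un_disjoint Diff_disjoint Un_Diff_cancel
        Un_absorb1 finite_Diff finite_subset)
  ultimately have "card A \<le> rig_rank d p A"
    using rank_D rank_complement[OF A] by arith
  then show ?thesis using finite_part[OF A] by (intro rig_indep_if_card_le_rank)
qed

lemma part_containing_e0: "A \<in> P \<Longrightarrow> e0 \<in> A \<Longrightarrow> A = {e0}"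
proof -
  assume A: "A \<in> P" "e0 \<in> A"
  have "f = e0" if f: "f \<in> A" for f
  proof -
    obtain c where c: "rig_comb d p c A = rig_row d p e0" "c f \<noteq> 0"
      using row_e0_comb_part[OF A(1) f] by blast
    let ?b = "\<lambda>e. if e = e0 then 1 else 0"
    have "rig_comb d p ?b A = rig_comb d p ?b {e0}"
      using A(2) finite_part[OF A(1)] by (intro rig_comb_mono_neutral) auto
    also have "\<dots> = rig_row d p e0" by (simp add: rig_comb_def)
    finally have "rig_comb d p c A = rig_comb d p ?b A" using c(1) by simp
    then have "c f = ?b f" using part_indep[OF A(1)] f by (intro rig_indep_comb_unique)
    then show ?thesis using c(2) by (simp split: if_splits)
  qed
  then show ?thesis using A(2) by blast
qed

lemma part_minus_edge_insert_e0_indep: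
  assumes A: "A \<in> P" "e0 \<notin> A" and f: "f \<in> A"
  shows "rig_indep d p (insert e0 (A - {f}))"
  unfolding rig_indep_iff_comb
proof (intro conjI allI impI ballI)
  have finA: "finite A" using finite_part[OF A(1)] .
  then show "finite (insert e0 (A - {f}))" by simp
  fix b e assume b: "rig_comb d p b (insert e0 (A - {f})) = 0" and e: "e \<in> insert e0 (A - {f})"
  have split: "(\<lambda>col. b e0 * rig_row d p e0 col) + rig_comb d p b (A - {f}) = 0"
    using b finA A(2) by (simp add: rig_comb_insert)
  have "b e0 = 0"
  proof (rule ccontr)
    assume "b e0 \<noteq> 0"
    let ?b = "\<lambda>e. if e \<in> A - {f} then - b e / b e0 else 0"
    have "rig_comb d p ?b A = rig_comb d p ?b (A - {f})"
      using finA by (intro rig_comb_mono_neutral) auto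
    also have "\<dots> = rig_row d p e0"
      using split \<open>b e0 \<noteq> 0\<close>
      by (auto simp: rig_comb_def fun_eq_iff sum_divide_distrib[symmetric] sum_negf field_simps
          add_eq_0_iff dest: fun_cong)
    finally have "rig_comb d p ?b A = rig_row d p e0" .
    moreover obtain c where "rig_comb d p c A = rig_row d p e0" "c f \<noteq> 0"
      using row_e0_comb_part[OF A(1) f] by blast
    ultimately have "rig_comb d p c A = rig_comb d p ?b A" by simp
    then have "c f = ?b f" using part_indep[OF A(1)] f by (intro rig_indep_comb_unique)
    then show False using \<open>c f \<noteq> 0\<close> by simp
  qed
  then have "rig_comb d p b (A - {f}) = 0" using split by (simp add: fun_eq_iff)
  then have "\<forall>g\<in>A - {f}. b g = 0"
    using rig_indepD[OF rig_indep_subset[OF part_indep[OF A(1)]]] by blast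
  then show "b e = 0" using e \<open>b e0 = 0\<close> by auto
qed

lemma part_insert_e0_circuit:
  assumes A: "A \<in> P" "e0 \<notin> A"
  shows "rig_circuit d p (insert e0 A)"
  unfolding rig_circuit_def
proof (intro conjI allI impI)
  have finA: "finite A" using finite_part[OF A(1)] .
  then show "finite (insert e0 A)" by simp
  obtain f where f: "f \<in> A" using part_nonempty[OF A(1)] by blast
  obtain c where c: "rig_comb d p c A = rig_row d p e0"
    using row_e0_comb_part[OF A(1) f] by blast
  have "rig_comb d p (c(e0 := - 1)) (insert e0 A) = 0"
  proof -
    have "rig_comb d p (c(e0 := - 1)) A = rig_comb d p c A"
      using A(2) by (intro rig_comb_cong) auto
    then show ?thesis using finA A(2) c by (simp add: rig_comb_insert fun_eq_iff)
  qed
  then show "\<not> rig_indep d p (insert e0 A)"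
    using rig_indepD[of d p "insert e0 A" "c(e0 := - 1)" e0] by auto
next
  fix C' assume C': "C' \<subset> insert e0 A"
  show "rig_indep d p C'"
  proof (cases "A \<subseteq> C'")
    case True
    then have "C' = A" using C' A(2) by blast
    then show ?thesis using part_indep[OF A(1)] by simp
  next
    case False
    then obtain f where "f \<in> A" "f \<notin> C'" by blast
    then have "C' \<subseteq> insert e0 (A - {f})" using C' by blast
    then show ?thesis
      using part_minus_edge_insert_e0_indep[OF A \<open>f \<in> A\<close>] by (rule rig_indep_subset[rotated])
  qed
qed

lemma indep_Un_part_minus_edge:
  assumes A: "A \<in> P" "e0 \<notin> A" and f: "f \<in> A"
    and I: "I \<subseteq> D - A" "rig_indep d p I"
  shows "rig_indep d p (I \<union> (A - {f}))"
  unfolding rig_indep_iff_comb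
proof (intro conjI allI impI ballI)
  have finI: "finite I" using I(2) by (simp add: rig_indep_def)
  have finA: "finite A" using finite_part[OF A(1)] .
  show "finite (I \<union> (A - {f}))" using finI finA by simp
  fix b e assume b: "rig_comb d p b (I \<union> (A - {f})) = 0" and e: "e \<in> I \<union> (A - {f})"
  have C: "finite (I \<union> (A - {f}))" "I \<union> (A - {f}) \<subseteq> D"
    using finI finA I(1) part_subset[OF A(1)] by auto
  have CA: "(I \<union> (A - {f})) \<inter> A = A - {f}" using I(1) by blast
  obtain l where l: "rig_comb d p b (A - {f}) = (\<lambda>col. l * rig_row d p e0 col)"
    using dependence_restrict_part[OF C b A(1)] unfolding CA by blast
  have "rig_comb d p (b(e0 := - l)) (insert e0 (A - {f})) = 0"
  proof -
    have "rig_comb d p (b(e0 := - l)) (A - {f}) = rig_comb d p b (A - {f})"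
      using A(2) by (intro rig_comb_cong) auto
    then show ?thesis using finA A(2) l by (simp add: rig_comb_insert fun_eq_iff)
  qed
  note zero = rig_indepD[OF part_minus_edge_insert_e0_indep[OF A f] this]
  have "(b(e0 := - l)) e0 = 0" by (rule zero) (rule insertI1)
  then have "l = 0" by simp
  have bA: "b g = 0" if "g \<in> A - {f}" for g
  proof -
    have "(b(e0 := - l)) g = 0" using that by (intro zero) (rule insertI2)
    then show ?thesis using that A(2) by (auto split: if_splits)
  qed
  from \<open>l = 0\<close> have "rig_comb d p b (A - {f}) = 0" using l by (simp add: fun_eq_iff)
  moreover have "I \<inter> (A - {f}) = {}" using I(1) by blast
  then have "rig_comb d p b (I \<union> (A - {f})) = rig_comb d p b I + rig_comb d p b (A - {f})"
    using finI finA by (intro rig_comb_Un) auto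
  ultimately have "rig_comb d p b I = 0" using b by simp
  note bI = rig_indepD[OF I(2) this]
  show "b e = 0" using e bA bI by blast
qed

lemma rank_Un_part:
  assumes A: "A \<in> P" "e0 \<notin> A" and U: "U \<subseteq> D - A"
    and e0U: "rig_row d p e0 \<in> real_fun.span (rig_row d p ` U)"
  shows "rig_rank d p (U \<union> A) + 1 = rig_rank d p U + card A"
proof (rule antisym)
  have finU: "finite U" using U finite_D finite_subset by blast
  have finA: "finite A" using finite_part[OF A(1)] .
  show "rig_rank d p (U \<union> A) + 1 \<le> rig_rank d p U + card A"
    using rig_rank_Un_shared[OF finU finA e0U row_e0_in_span_part[OF A(1)] row_e0_nonzero]
      rig_rank_indep[OF part_indep[OF A(1)]] by simp
  obtain I where I: "I \<subseteq> U" "rig_indep d p I" "card I = rig_rank d p U"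
    by (rule rig_rank_attained[OF finU])
  obtain f where f: "f \<in> A" using part_nonempty[OF A(1)] by blast
  have "rig_indep d p (I \<union> (A - {f}))"
    using indep_Un_part_minus_edge[OF A f _ I(2)] I(1) U by blast
  then have "card (I \<union> (A - {f})) \<le> rig_rank d p (U \<union> A)"
    using finU finA I(1) by (intro card_le_rig_rank) auto
  moreover have "card (I \<union> (A - {f})) = card I + card (A - {f})"
    using I(1) U finU finA by (intro card_Un_disjoint) (auto intro: finite_subset)
  moreover have "card A = Suc (card (A - {f}))" using card.remove[OF finA f] .
  ultimately show "rig_rank d p U + card A \<le> rig_rank d p (U \<union> A) + 1"
    using I(3) by linarith
qed

lemma rank_Un_parts:
  assumes A1: "A1 \<in> P" and Q: "finite Q" "Q \<subseteq> P - {A1}" "\<forall>A\<in>Q. e0 \<notin> A"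
  shows "rig_rank d p (A1 \<union> \<Union>Q) + card Q = card (A1 \<union> \<Union>Q)"
  using Q
proof (induction Q rule: finite_induct)
  case empty
  then show ?case using rig_rank_indep[OF part_indep[OF A1]] by simp
next
  case (insert A Q)
  have A: "A \<in> P" "A \<noteq> A1" "e0 \<notin> A" using insert.prems by auto
  have "B \<subseteq> D - A" if B: "B \<in> insert A1 Q" for B
  proof -
    have "B \<in> P" "B \<noteq> A" using B A1 insert.prems insert.hyps(2) A(2) by auto
    then show ?thesis using part_subset parts_disjoint[OF _ A(1)] by blast
  qed
  then have U: "A1 \<union> \<Union>Q \<subseteq> D - A" by (simp add: Union_least)
  have "rig_row d p e0 \<in> real_fun.span (rig_row d p ` (A1 \<union> \<Union>Q))"
    using row_e0_in_span_part[OF A1] span_rows_mono[of A1 "A1 \<union> \<Union>Q" d p] by blast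
  then have "rig_rank d p (A1 \<union> \<Union>Q \<union> A) + 1 = rig_rank d p (A1 \<union> \<Union>Q) + card A"
    using rank_Un_part[OF A(1,3) U] by blast
  moreover have "card (A1 \<union> \<Union>Q \<union> A) = card (A1 \<union> \<Union>Q) + card A"
    using U finite_D finite_part[OF A(1)] by (intro card_Un_disjoint) (auto intro: finite_subset)
  moreover have "A1 \<union> \<Union>(insert A Q) = A1 \<union> \<Union>Q \<union> A" by blast
  ultimately show ?case using insert.IH insert.prems insert.hyps by simp
qed

lemma card_parts_avoiding_e0:
  assumes A1: "A1 \<in> P" and avoid: "\<forall>A\<in>P - {A1}. e0 \<notin> A"
  shows "card (P - {A1}) = k"
proof -
  have "A1 \<union> \<Union>(P - {A1}) = D" using A1 Union_P by blast
  then show ?thesis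
    using rank_Un_parts[OF A1 _ order.refl avoid] finite_P rank_D by simp
qed

lemma parallel_connection_of_circuits:
  assumes Q: "Q \<subseteq> P" "Q \<noteq> {}" "\<forall>A\<in>Q. e0 \<notin> A" and cover: "D \<subseteq> insert e0 (\<Union>Q)"
  shows "\<exists>Hs. length Hs = card Q \<and> (\<forall>H\<in>set Hs. rig_circuit d p (snd H)) \<and>
           parallel_connection Hs u v V (\<Union>A\<in>Q. insert e0 A)"
proof -
  obtain As where As: "set As = Q" "distinct As"
    using finite_distinct_list[OF finite_subset[OF Q(1) finite_P]] by blast
  have "\<exists>Hs. map snd Hs = map (insert e0) As \<and> parallel_connection Hs u v V (\<Union>A\<in>set As. insert e0 A)"
  proof (rule parallel_connection_of_separated_parts[OF graph u_in_V v_in_V u_neq_v As(2)])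
    show "As \<noteq> []" using As(1) Q(2) by auto
    show "A \<subseteq> D" "e0 \<notin> A" if "A \<in> set As" for A
      using that As(1) Q part_subset by auto
    show "D \<subseteq> insert e0 (\<Union>(set As))" using cover As(1) by simp
    show "e \<inter> f \<subseteq> {u, v}" if "A \<in> set As" "B \<in> set As" "A \<noteq> B" "e \<in> A" "f \<in> B" for A B e f
    proof -
      have "f \<in> D - A" using that As(1) Q(1) part_subset parts_disjoint by blast
      then show ?thesis using edge_separation[of A e f] that As(1) Q(1) by blast
    qed
  qed
  then obtain Hs where Hs: "map snd Hs = map (insert e0) As"
    "parallel_connection Hs u v V (\<Union>A\<in>Q. insert e0 A)" using As(1) by auto
  have "length Hs = card Q" using Hs(1) As distinct_card by (metis length_map)
  moreover have "rig_circuit d p (snd H)" if "H \<in> set Hs" for H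
  proof -
    have "snd H \<in> set (map snd Hs)" using that by simp
    then obtain A where "A \<in> Q" "snd H = insert e0 A" using Hs(1) As(1) by auto
    then show ?thesis using part_insert_e0_circuit Q by auto
  qed
  ultimately show ?thesis using Hs(2) by blast
qed

lemma parallel_connection_if_e0_in_D:
  assumes "1 \<le> k" "e0 \<in> D"
  shows "\<exists>Hs. length Hs = k \<and> (\<forall>H\<in>set Hs. rig_circuit d p (snd H)) \<and> parallel_connection Hs u v V D"
proof -
  obtain A1 where A1: "A1 \<in> P" "e0 \<in> A1" using Union_P assms(2) by blast
  then have A1_eq: "A1 = {e0}" by (rule part_containing_e0)
  let ?Q = "P - {A1}"
  have avoid: "\<forall>A\<in>?Q. e0 \<notin> A"
  proof
    fix A assume "A \<in> ?Q"
    then show "e0 \<notin> A" using part_containing_e0[of A] A1_eq by auto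
  qed
  then have card: "card ?Q = k" using A1(1) by (intro card_parts_avoiding_e0)
  then have "?Q \<noteq> {}" using assms(1) by (metis card.empty not_one_le_zero)
  moreover have cover: "D \<subseteq> insert e0 (\<Union>?Q)" using Union_P A1_eq by auto
  ultimately have "(\<Union>A\<in>?Q. insert e0 A) = D" using part_subset assms(2) by blast
  then show ?thesis
    using parallel_connection_of_circuits[OF _ \<open>?Q \<noteq> {}\<close> avoid cover] card by auto
qed

lemma parallel_connection_if_e0_notin_D:
  assumes "e0 \<notin> D"
  shows "\<exists>Hs EE. length Hs = k + 1 \<and> (\<forall>H\<in>set Hs. rig_circuit d p (snd H)) \<and>
           parallel_connection Hs u v V EE \<and> D = EE - {e0}"
proof -
  have avoid: "\<forall>A\<in>P. e0 \<notin> A" using part_subset assms by blast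
  obtain A1 where A1: "A1 \<in> P" using exists_other_part by blast
  have "card P = k + 1"
    using card_parts_avoiding_e0[OF A1] avoid card.remove[OF finite_P A1] by simp
  moreover have "D = (\<Union>A\<in>P. insert e0 A) - {e0}" using Union_P assms by auto
  moreover have "D \<subseteq> insert e0 (\<Union>P)" "P \<noteq> {}" using Union_P A1 by auto
  ultimately show ?thesis using parallel_connection_of_circuits[OF order.refl _ avoid] by metis
qed

end

theorem proposition3p11:
  fixes d k :: nat and V :: "'v set" and D :: "'v set set"
    and p :: "'v \<Rightarrow> nat \<Rightarrow> real" and P :: "'v set set set" and u v :: 'v
  assumes "d \<ge> 1" and "k \<ge> 2"
    and "is_graph V D"
    and "generic d V p"
    and "rig_connected d p D"
    and "kfold_circuit d p k D"
    and "principal_partition d p k D P"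
    and "u \<noteq> v"
    and "{w \<in> V. technicolour P w} = {u, v}"
  shows "({u, v} \<in> D \<longrightarrow>
            (\<exists>Hs. length Hs = k \<and> (\<forall>H\<in>set Hs. rig_circuit d p (snd H)) \<and>
                  parallel_connection Hs u v V D))
       \<and> ({u, v} \<notin> D \<longrightarrow>
            (\<exists>Hs EE. length Hs = k + 1 \<and> (\<forall>H\<in>set Hs. rig_circuit d p (snd H)) \<and>
                  parallel_connection Hs u v V EE \<and> D = EE - {{u, v}}))"
proof -
  have "p u 0 \<noteq> p v 0"
    using generic_points_distinct[OF assms(4) _ _ assms(8)] assms(1,9) by auto
  then have "\<exists>i<d. p u i \<noteq> p v i" using assms(1) by (intro exI[of _ 0]) simp
  then interpret two_technicolour_kfold_circuit d k V D p P u v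
    using assms by unfold_locales
  show ?thesis
    using parallel_connection_if_e0_in_D parallel_connection_if_e0_notin_D assms(2) by simp
qed

end
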